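(* For every vertex-coloured interval graph $G^c$ with the notation below, $$\gamma^t(G^c)=\min\{f(S,i)+|C\setminus S| \;:\; S\subseteq C,\ i\in V,\ [1,i]\text{ dominates }G^c\}.$$
   Context: $G^c$ is a vertex-coloured interval graph with vertex set $V=\{1,\dots,n\}$, colour set $C$ (each vertex has exactly one colour $c(v)$, every colour used), and a fixed interval representation $I_i=[l_i,r_i]$ (vertices adjacent iff intervals intersect), with vertices numbered so that $r_1\le r_2\le\dots\le r_n$. For $a\le b$, $[a,b]$ denotes the vertex set $\{i\in V: a\le i\le b\}$. A set is dominating (of a vertex set $X$) if every vertex (of $X$) is in it or adjacent to a vertex of it. An $i$-prefix dominating set is a set $U\subseteq V$ with $i\in U$ that dominates $[1,i]$. $U$ is proper if there are no distinct $i,j\in U$ with $I_i\subseteq I_j$. For $S\subseteq C$ and $i\in V$, $f(S,i)$ is the minimum size of a proper $i$-prefix dominating set whose set of colours is exactly $S$ (or $\infty$ if none exists); $f(S,0)=0$ if $S=\emptyset$ and $\infty$ otherwise. A tropical dominating set is a dominating set containing every colour; $\gamma^t(G^c)$ is its minimum size. *)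

theory Defs
  imports Main "HOL-Library.Extended_Nat"
begin

text \<open>A vertex-coloured interval graph on the vertex set {1..n}: vertex i is
represented by the closed real interval [l i, r i], vertices are numbered so that
right endpoints are non-decreasing, vertex i has colour c i, and C is the set of
colours (every colour is used).\<close>

definition coloured_interval_graph ::
  "nat \<Rightarrow> (nat \<Rightarrow> real) \<Rightarrow> (nat \<Rightarrow> real) \<Rightarrow> (nat \<Rightarrow> 'c) \<Rightarrow> 'c set \<Rightarrow> bool" where
  "coloured_interval_graph n l r c C \<longleftrightarrow>
     (\<forall>i\<in>{1..n}. l i \<le> r i) \<and>
     (\<forall>i\<in>{1..n}. \<forall>j\<in>{1..n}. i \<le> j \<longrightarrow> r i \<le> r j) \<and>
     c ` {1..n} = C"

definition ivl :: "(nat \<Rightarrow> real) \<Rightarrow> (nat \<Rightarrow> real) \<Rightarrow> nat \<Rightarrow> real set" where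
  "ivl l r i = {l i .. r i}"

definition adj :: "(nat \<Rightarrow> real) \<Rightarrow> (nat \<Rightarrow> real) \<Rightarrow> nat \<Rightarrow> nat \<Rightarrow> bool" where
  "adj l r u v \<longleftrightarrow> u \<noteq> v \<and> ivl l r u \<inter> ivl l r v \<noteq> {}"

definition dominates ::
  "(nat \<Rightarrow> real) \<Rightarrow> (nat \<Rightarrow> real) \<Rightarrow> nat set \<Rightarrow> nat set \<Rightarrow> bool" where
  "dominates l r D X \<longleftrightarrow> (\<forall>x\<in>X. x \<in> D \<or> (\<exists>y\<in>D. adj l r x y))"

definition proper_set :: "(nat \<Rightarrow> real) \<Rightarrow> (nat \<Rightarrow> real) \<Rightarrow> nat set \<Rightarrow> bool" where
  "proper_set l r U \<longleftrightarrow> \<not> (\<exists>i\<in>U. \<exists>j\<in>U. i \<noteq> j \<and> ivl l r i \<subseteq> ivl l r j)"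

definition prefix_dominating ::
  "nat \<Rightarrow> (nat \<Rightarrow> real) \<Rightarrow> (nat \<Rightarrow> real) \<Rightarrow> nat \<Rightarrow> nat set \<Rightarrow> bool" where
  "prefix_dominating n l r i U \<longleftrightarrow> U \<subseteq> {1..n} \<and> i \<in> U \<and> dominates l r U {1..i}"

text \<open>f(S,i), with value \<infinity> (Inf of the empty set of enat) if no such set exists.\<close>
definition fS ::
  "nat \<Rightarrow> (nat \<Rightarrow> real) \<Rightarrow> (nat \<Rightarrow> real) \<Rightarrow> (nat \<Rightarrow> 'c) \<Rightarrow> 'c set \<Rightarrow> nat \<Rightarrow> enat" where
  "fS n l r c S i =
     (if i = 0 then (if S = {} then 0 else \<infinity>)
      else Inf {enat (card U) | U. prefix_dominating n l r i U \<and> proper_set l r U \<and> c ` U = S})"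

definition tropical_domination_number ::
  "nat \<Rightarrow> (nat \<Rightarrow> real) \<Rightarrow> (nat \<Rightarrow> real) \<Rightarrow> (nat \<Rightarrow> 'c) \<Rightarrow> 'c set \<Rightarrow> enat" where
  "tropical_domination_number n l r c C =
     Inf {enat (card D) | D. D \<subseteq> {1..n} \<and> dominates l r D {1..n} \<and> C \<subseteq> c ` D}"

end

theory Submission
  imports Defs
begin

text \<open>
  A tropical dominating set D yields a term of the minimum: pass to a minimal subfamily E of D
  whose intervals contain all intervals of D. E is proper, still dominates, and with
  i = max E the prefix [1,i] dominates the graph; E is then an i-prefix dominating set
  for S = c(E), and the colours outside S are paid for by the vertices of D - E.
  Conversely, an optimal set U for f(S,i) dominates all of [1,i], and every later vertex
  x that meets some interval of [1,i] meets I_i, because r_k \<le> r_i \<le> r_x; adding one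
  vertex for each colour outside S gives a tropical dominating set.
\<close>

lemma Inf_enat_in: "(A :: enat set) \<noteq> {} \<Longrightarrow> Inf A \<in> A"
  unfolding Inf_enat_def by (auto intro: LeastI)

lemma exists_representatives:
  assumes "B \<subseteq> f ` A" "finite B"
  obtains W where "W \<subseteq> A" "B \<subseteq> f ` W" "card W \<le> card B"
proof
  let ?W = "inv_into A f ` B"
  show "?W \<subseteq> A" using assms(1) by (auto intro: inv_into_into)
  show "B \<subseteq> f ` ?W" using assms(1) by (force simp: f_inv_into_f)
  show "card ?W \<le> card B" using assms(2) by (rule card_image_le)
qed

lemma dominates_mono: "D \<subseteq> D' \<Longrightarrow> dominates l r D X \<Longrightarrow> dominates l r D' X"
  unfolding dominates_def by blast

lemma adj_right_end_between:
  assumes "adj l r x k" "r k \<le> r i" "r i \<le> r x" "l i \<le> r i" "x \<noteq> i"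
  shows "adj l r x i"
proof -
  have "l x \<le> r k" using assms(1) unfolding adj_def ivl_def by auto
  then have "r i \<in> ivl l r x \<inter> ivl l r i" using assms(2-4) unfolding ivl_def by auto
  then show ?thesis using assms(5) unfolding adj_def by blast
qed

lemma prefix_dominating_dominates:
  assumes G: "coloured_interval_graph n l r c C"
    and i: "i \<in> {1..n}" and prefix: "dominates l r {1..i} {1..n}"
    and U: "prefix_dominating n l r i U"
  shows "dominates l r U {1..n}"
  unfolding dominates_def
proof
  fix x assume x: "x \<in> {1..n}"
  show "x \<in> U \<or> (\<exists>y\<in>U. adj l r x y)"
  proof (cases "x \<le> i")
    case True
    then show ?thesis using x U unfolding prefix_dominating_def dominates_def by auto
  next
    case False
    then obtain k where k: "k \<in> {1..i}" "adj l r x k"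
      using prefix x unfolding dominates_def by auto
    have "r k \<le> r i" "r i \<le> r x" "l i \<le> r i"
      using G k(1) i x False unfolding coloured_interval_graph_def by auto
    then have "adj l r x i" using adj_right_end_between k(2) False by blast
    then show ?thesis using U unfolding prefix_dominating_def by blast
  qed
qed

lemma fS_le_card:
  assumes "i \<noteq> 0" "prefix_dominating n l r i U" "proper_set l r U" "c ` U = S"
  shows "fS n l r c S i \<le> enat (card U)"
  unfolding fS_def using assms by (auto intro!: Inf_lower)

lemma fS_attained:
  assumes "i \<noteq> 0" "fS n l r c S i \<noteq> \<infinity>"
  obtains U where "prefix_dominating n l r i U" "proper_set l r U" "c ` U = S"
    "fS n l r c S i = enat (card U)"
proof -
  let ?A = "{enat (card U) | U. prefix_dominating n l r i U \<and> proper_set l r U \<and> c ` U = S}"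
  have f: "fS n l r c S i = Inf ?A" using assms(1) unfolding fS_def by simp
  then have "?A \<noteq> {}" using assms(2) by (metis Inf_empty top_enat_def)
  then have "Inf ?A \<in> ?A" by (rule Inf_enat_in)
  then show ?thesis using f that by auto
qed

lemma tropical_domination_number_le:
  assumes G: "coloured_interval_graph n l r c C"
    and S: "S \<subseteq> C" and i: "i \<in> {1..n}" and prefix: "dominates l r {1..i} {1..n}"
  shows "tropical_domination_number n l r c C \<le> fS n l r c S i + enat (card (C - S))"
proof (cases "fS n l r c S i = \<infinity>")
  case False
  have "i \<noteq> 0" using i by simp
  then obtain U where U: "prefix_dominating n l r i U" "proper_set l r U" "c ` U = S"
    and fU: "fS n l r c S i = enat (card U)"
    using False by (rule fS_attained)
  have "C - S \<subseteq> c ` {1..n}" "finite (C - S)"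
    using G unfolding coloured_interval_graph_def by auto
  then obtain W where W: "W \<subseteq> {1..n}" "C - S \<subseteq> c ` W" "card W \<le> card (C - S)"
    by (rule exists_representatives)
  have "U \<subseteq> {1..n}" using U(1) unfolding prefix_dominating_def by blast
  moreover have "dominates l r (U \<union> W) {1..n}"
    using prefix_dominating_dominates[OF G i prefix U(1)] by (rule dominates_mono[rotated]) blast
  moreover have "C \<subseteq> c ` (U \<union> W)" using U(3) W(2) by blast
  ultimately have "tropical_domination_number n l r c C \<le> enat (card (U \<union> W))"
    unfolding tropical_domination_number_def using W(1) by (auto intro!: Inf_lower)
  also have "card (U \<union> W) \<le> card U + card (C - S)"
    using card_Un_le[of U W] W(3) by linarith
  finally show ?thesis using fU by simp
qed simp

definition covers :: "(nat \<Rightarrow> real) \<Rightarrow> (nat \<Rightarrow> real) \<Rightarrow> nat set \<Rightarrow> nat set \<Rightarrow> bool" where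
  "covers l r E D \<longleftrightarrow> (\<forall>x\<in>D. \<exists>y\<in>E. ivl l r x \<subseteq> ivl l r y)"

lemma exists_proper_cover:
  assumes "finite D"
  obtains E where "E \<subseteq> D" "covers l r E D" "proper_set l r E"
proof -
  let ?P = "\<lambda>E. E \<subseteq> D \<and> covers l r E D"
  have "?P D" unfolding covers_def by blast
  then obtain E where E: "?P E" and min: "\<And>F. ?P F \<Longrightarrow> card E \<le> card F"
    using ex_has_least_nat[of ?P D card] by blast
  have "proper_set l r E"
    unfolding proper_set_def
  proof
    assume "\<exists>a\<in>E. \<exists>b\<in>E. a \<noteq> b \<and> ivl l r a \<subseteq> ivl l r b"
    then obtain a b where ab: "a \<in> E" "b \<in> E" "a \<noteq> b" "ivl l r a \<subseteq> ivl l r b" by blast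
    \<comment> \<open>Dropping a keeps a cover, since whatever a contains, b contains too.\<close>
    have "covers l r (E - {a}) D"
      using E ab unfolding covers_def by (metis Diff_iff singletonD subset_trans)
    then have "card E \<le> card (E - {a})" using E min by blast
    moreover have "card (E - {a}) < card E"
      using ab(1) E finite_subset[OF _ assms] by (intro card_Diff1_less) auto
    ultimately show False by simp
  qed
  with E that show ?thesis by blast
qed

lemma dominates_cover:
  assumes "dominates l r D X" "covers l r E D" "\<forall>x\<in>X. l x \<le> r x"
  shows "dominates l r E X"
  unfolding dominates_def
proof
  fix x assume x: "x \<in> X"
  have nonempty: "ivl l r x \<noteq> {}" using assms(3) x unfolding ivl_def by auto
  have "x \<in> D \<or> (\<exists>y\<in>D. adj l r x y)" using assms(1) x unfolding dominates_def by blast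
  then obtain y where "y \<in> D" "ivl l r x \<inter> ivl l r y \<noteq> {}"
    using nonempty unfolding adj_def by auto
  moreover obtain z where "z \<in> E" "ivl l r y \<subseteq> ivl l r z"
    using assms(2) \<open>y \<in> D\<close> unfolding covers_def by blast
  ultimately have "z \<in> E" "ivl l r x \<inter> ivl l r z \<noteq> {}" by blast+
  then show "x \<in> E \<or> (\<exists>y\<in>E. adj l r x y)" unfolding adj_def by (cases "x = z") auto
qed

lemma card_plus_missing_colours_le:
  assumes "finite D" "E \<subseteq> D" "C \<subseteq> c ` D"
  shows "card E + card (C - c ` E) \<le> card D"
proof -
  have "C - c ` E \<subseteq> c ` (D - E)" using assms(3) by blast
  then have "card (C - c ` E) \<le> card (c ` (D - E))" using assms(1) by (simp add: card_mono)
  also have "\<dots> \<le> card (D - E)" using assms(1) by (simp add: card_image_le)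
  also have "\<dots> = card D - card E" using assms(1,2) finite_subset by (metis card_Diff_subset)
  finally show ?thesis using card_mono[OF assms(1,2)] by linarith
qed

lemma min_le_tropical_dominating_set:
  assumes G: "coloured_interval_graph n l r c C" and n: "n \<ge> 1"
    and D: "D \<subseteq> {1..n}" "dominates l r D {1..n}" "C \<subseteq> c ` D"
  shows "Inf {fS n l r c S i + enat (card (C - S)) | S i.
           S \<subseteq> C \<and> i \<in> {1..n} \<and> dominates l r {1..i} {1..n}} \<le> enat (card D)"
proof -
  have "finite D" using D(1) finite_subset by blast
  then obtain E where E: "E \<subseteq> D" "covers l r E D" "proper_set l r E"
    by (rule exists_proper_cover)
  have Edom: "dominates l r E {1..n}"
    using D(2) E(2) G unfolding coloured_interval_graph_def by (blast intro: dominates_cover)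
  have "1 \<in> {1..n}" using n by simp
  then have "E \<noteq> {}" using Edom unfolding dominates_def by blast
  moreover have "finite E" using \<open>finite D\<close> E(1) finite_subset by blast
  ultimately have iE: "Max E \<in> E" and E_prefix: "E \<subseteq> {1..Max E}"
    using D(1) E(1) by auto
  have i: "Max E \<in> {1..n}" using iE D(1) E(1) by blast
  have "prefix_dominating n l r (Max E) E"
    unfolding prefix_dominating_def using D(1) E(1) iE i Edom by (auto simp: dominates_def)
  then have "fS n l r c (c ` E) (Max E) \<le> enat (card E)"
    using i E(3) by (intro fS_le_card) auto
  then have "fS n l r c (c ` E) (Max E) + enat (card (C - c ` E))
      \<le> enat (card E + card (C - c ` E))"
    by (metis add_right_mono plus_enat_simps(1))
  also have "\<dots> \<le> enat (card D)"
    using card_plus_missing_colours_le[OF \<open>finite D\<close> E(1) D(3)] by simp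
  finally have "fS n l r c (c ` E) (Max E) + enat (card (C - c ` E)) \<le> enat (card D)" .
  moreover have "c ` E \<subseteq> C" using G D(1) E(1) unfolding coloured_interval_graph_def by blast
  moreover have "dominates l r {1..Max E} {1..n}" using E_prefix Edom by (rule dominates_mono)
  ultimately show ?thesis using i by (blast intro: Inf_lower2)
qed

theorem mainTheorem18:
  fixes n :: nat and l r :: "nat \<Rightarrow> real" and c :: "nat \<Rightarrow> 'c" and C :: "'c set"
  assumes "coloured_interval_graph n l r c C"
    and "n \<ge> 1"
  shows "tropical_domination_number n l r c C =
    Inf {fS n l r c S i + enat (card (C - S)) | S i.
           S \<subseteq> C \<and> i \<in> {1..n} \<and> dominates l r {1..i} {1..n}}"
proof (rule antisym)
  show "tropical_domination_number n l r c C \<le> Inf {fS n l r c S i + enat (card (C - S)) | S i.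
           S \<subseteq> C \<and> i \<in> {1..n} \<and> dominates l r {1..i} {1..n}}"
    using tropical_domination_number_le[OF assms(1)] by (blast intro: Inf_greatest)
  show "Inf {fS n l r c S i + enat (card (C - S)) | S i.
           S \<subseteq> C \<and> i \<in> {1..n} \<and> dominates l r {1..i} {1..n}} \<le> tropical_domination_number n l r c C"
    unfolding tropical_domination_number_def
    using min_le_tropical_dominating_set[OF assms] by (blast intro: Inf_greatest)
qed

end
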